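(* Let $\mathcal{K}$ be a field with a nonarchimedean valuation and let $B\in\mathcal{K}^{n\times n}$ be an upper triangular matrix such that $\nu(\det B(\{1,\dots,|S|\},S))\in\mathbb{R}$ for all $S\subseteq[n]$ and the function $2^{[n]}\to\mathbb{R}$, $S\mapsto \nu(\det B(\{1,\dots,|S|\},S))$, is submodular. Then \[ \nu(\det B(\{1,\dots,|S|\},S))\;\ge\;\nu(\det B(T,S)) \] for all $S,T\subseteq[n]$ with $|S|=|T|$.
   Context: $\nu=-\mathrm{val}$ is the negative of the valuation, extended by $\nu(0)=-\infty$. $B(T,S)$ is the submatrix with rows $T$ and columns $S$, and the determinant of the empty matrix is $1$. A function $F:2^{[n]}\to\mathbb{R}$ is submodular if $F(S\cap T)+F(S\cup T)\le F(S)+F(T)$ for all $S,T$. *)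

theory Defs
  imports "HOL-Library.Extended_Real" "Jordan_Normal_Form.Determinant" "Jordan_Normal_Form.DL_Submatrix"
begin

definition nonarch_valuation :: "('a::field \<Rightarrow> ereal) \<Rightarrow> bool" where
  "nonarch_valuation val \<longleftrightarrow>
     (\<forall>x. val x = \<infinity> \<longleftrightarrow> x = 0) \<and>
     (\<forall>x. val x \<noteq> -\<infinity>) \<and>
     (\<forall>x y. val (x * y) = val x + val y) \<and>
     (\<forall>x y. min (val x) (val y) \<le> val (x + y))"

text \<open>nu = - val, so nu 0 = -\<infinity>.\<close>
definition nu :: "('a \<Rightarrow> ereal) \<Rightarrow> 'a \<Rightarrow> ereal" where
  "nu val x = - val x"

text \<open>Submodularity of F : 2^[n] \<rightarrow> R, with [n] = {0..<n} (0-based indexing).\<close>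
definition submodular_on :: "nat \<Rightarrow> (nat set \<Rightarrow> real) \<Rightarrow> bool" where
  "submodular_on n F \<longleftrightarrow>
     (\<forall>S T. S \<subseteq> {0..<n} \<longrightarrow> T \<subseteq> {0..<n} \<longrightarrow> F (S \<inter> T) + F (S \<union> T) \<le> F S + F T)"

end

theory Submission
  imports Defs
begin

(* Write v = val = -nu, and top S for the minor of B on the first |S| rows and the columns S.
   We show v (top S) <= v (det B(T,S)) by induction on sum T + sum S.
   If S = {0,...,k-1}, the minor B(T,S) is upper triangular and vanishes unless T = S.
   Otherwise j is not in S but j+1 is, for some j. Submodularity at {0,...,j} and
   {0,...,j-1,j+1} gives v B(j,j+1) <= v B(j+1,j+1), so c = B(j+1,j+1) / B(j,j+1) has
   v c >= 0. Subtracting c times row j from row j+1 and swapping the columns j and j+1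
   gives an upper triangular matrix which again satisfies the hypotheses and whose top
   minors are those of B with j and j+1 exchanged; the induction hypothesis for it, at
   the columns S with j+1 replaced by j, bounds the minor on T and S of the row-reduced B.
   That minor differs from det B(T,S) by c det B(T',S), where T' is T with j+1 replaced
   by j (a term present only when j+1 is in T and j is not), and the ultrametric
   inequality together with the induction hypothesis for T' and S closes the step. *)

section \<open>Positions in finite sets of natural numbers\<close>

abbreviation adj_transpose :: "nat \<Rightarrow> nat \<Rightarrow> nat" where
  "adj_transpose j \<equiv> Transposition.transpose j (Suc j)"

lemma pick_ge_index:
  assumes "i < card X"
  shows "i \<le> pick X i"
proof -
  have "{a\<in>X. a < pick X i} \<subseteq> {..<pick X i}" by auto
  from card_mono[OF finite_lessThan this] show ?thesis
    using card_pick[of i X] assms by simp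
qed

lemma card_less_in_set:
  fixes X :: "nat set"
  assumes "finite X" and "x \<in> X"
  shows "card {a\<in>X. a < x} < card X"
proof -
  have "{a\<in>X. a < x} \<subset> X" using assms(2) by auto
  thus ?thesis using assms(1) by (rule psubset_card_mono[rotated])
qed

lemma pick_eq_iff:
  fixes X :: "nat set"
  assumes "i < card X" and "x \<in> X"
  shows "pick X i = x \<longleftrightarrow> i = card {a\<in>X. a < x}"
  using assms card_pick[of i X] pick_card_in_set[of x X] by auto

lemma pick_less_if_subset:
  assumes "I \<subseteq> {0..<m}" and "i < card I"
  shows "pick I i < m"
  using pick_in_set[of i I] assms by auto

lemma pick_atLeastLessThan:
  assumes "i < k"
  shows "pick {0..<k} i = i"
proof -
  have "{a\<in>{0..<k}. a < i} = {0..<i}" using assms by auto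
  hence "card {a\<in>{0..<k}. a < i} = i" by simp
  moreover have "pick {0..<k} (card {a\<in>{0..<k}. a < i}) = i"
    using assms by (intro pick_card_in_set) simp
  ultimately show ?thesis by simp
qed

lemma pick_strict_mono_image:
  assumes f: "strict_mono_on X f" and i: "i < card X"
  shows "pick (f ` X) i = f (pick X i)"
proof -
  let ?x = "pick X i"
  have x: "?x \<in> X" using pick_in_set i by blast
  have "{a \<in> f ` X. a < f ?x} = f ` {a\<in>X. a < ?x}"
    using strict_mono_on_less[OF f _ x] by auto
  moreover have "inj_on f {a\<in>X. a < ?x}"
    using strict_mono_on_imp_inj_on[OF f] by (rule inj_on_subset) auto
  ultimately have "card {a \<in> f ` X. a < f ?x} = card {a\<in>X. a < ?x}"
    by (simp add: card_image)
  also have "\<dots> = i" using card_pick i by blast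
  finally have "card {a \<in> f ` X. a < f ?x} = i" .
  thus ?thesis using pick_card_in_set[of "f ?x" "f ` X"] x by simp
qed

lemma pick_adj_transpose_image:
  assumes "\<not> (j \<in> X \<and> Suc j \<in> X)" and "i < card X"
  shows "pick (adj_transpose j ` X) i = adj_transpose j (pick X i)"
proof (rule pick_strict_mono_image[OF _ assms(2)], rule strict_mono_onI)
  fix a b assume "a \<in> X" "b \<in> X" "a < b"
  thus "adj_transpose j a < adj_transpose j b"
    using assms(1) by (auto simp: transpose_def)
qed

lemma atLeastLessThan_if_downward_closed:
  fixes S :: "nat set"
  assumes fin: "finite S" and closed: "\<And>j. Suc j \<in> S \<Longrightarrow> j \<in> S"
  shows "S = {0..<card S}"
proof -
  have initial: "{0..x} \<subseteq> S" if "x \<in> S" for x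
    using that
  proof (induction x)
    case (Suc x)
    hence "{0..x} \<subseteq> S" using closed by blast
    thus ?case using Suc.prems by (simp add: atLeast0_atMost_Suc)
  qed simp
  have "Suc x \<le> card S" if "x \<in> S" for x
    using card_mono[OF fin initial[OF that]] by simp
  hence "S \<subseteq> {0..<card S}" by (auto simp: Suc_le_eq)
  thus ?thesis by (rule card_subset_eq[OF finite_atLeastLessThan]) simp
qed

lemma sum_adj_transpose_image_less:
  fixes S :: "nat set"
  assumes "finite S" and "j \<notin> S" and "Suc j \<in> S"
  shows "\<Sum> (adj_transpose j ` S) < \<Sum> S"
proof -
  have "\<Sum> (adj_transpose j ` S) = (\<Sum>s\<in>S. adj_transpose j s)"
    by (simp add: sum.reindex)
  also have "\<dots> < (\<Sum>s\<in>S. s)"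
  proof (rule sum_strict_mono_ex1[OF assms(1)])
    show "\<forall>s\<in>S. adj_transpose j s \<le> s" using assms(2) by (auto simp: transpose_def)
    show "\<exists>s\<in>S. adj_transpose j s < s" using assms(3) by (intro bexI[of _ "Suc j"]) auto
  qed
  finally show ?thesis by simp
qed

section \<open>Minors of upper triangular matrices\<close>

lemma submatrix_carrier_mat:
  assumes "I \<subseteq> {0..<dim_row A}" and "J \<subseteq> {0..<dim_col A}"
  shows "submatrix A I J \<in> carrier_mat (card I) (card J)"
proof (rule carrier_matI)
  have "{i. i < dim_row A \<and> i \<in> I} = I" using assms(1) by auto
  thus "dim_row (submatrix A I J) = card I" by (simp only: dim_submatrix)
  have "{j. j < dim_col A \<and> j \<in> J} = J" using assms(2) by auto
  thus "dim_col (submatrix A I J) = card J" by (simp only: dim_submatrix)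
qed

lemma submatrix_index_subset:
  assumes "I \<subseteq> {0..<dim_row A}" and "J \<subseteq> {0..<dim_col A}"
    and "i < card I" and "j < card J"
  shows "submatrix A I J $$ (i, j) = A $$ (pick I i, pick J j)"
proof (rule submatrix_index)
  have "{i. i < dim_row A \<and> i \<in> I} = I" using assms(1) by auto
  thus "i < card {i. i < dim_row A \<and> i \<in> I}" using assms(3) by (simp only:)
  have "{j. j < dim_col A \<and> j \<in> J} = J" using assms(2) by auto
  thus "j < card {j. j < dim_col A \<and> j \<in> J}" using assms(4) by (simp only:)
qed

lemma det_submatrix_upper_triangular:
  fixes A :: "'a::comm_ring_1 mat"
  assumes A: "upper_triangular A" and I: "I \<subseteq> {0..<dim_row A}" and J: "J \<subseteq> {0..<dim_col A}"
    and card: "card I = card J"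
    and below: "\<And>i l. l < i \<Longrightarrow> i < card I \<Longrightarrow> pick J l < pick I i"
  shows "det (submatrix A I J) = (\<Prod>i = 0..<card I. A $$ (pick I i, pick J i))"
proof -
  let ?A = "submatrix A I J"
  have carrier: "?A \<in> carrier_mat (card I) (card I)"
    using submatrix_carrier_mat[OF I J] card by simp
  have idx: "\<And>i l. i < card I \<Longrightarrow> l < card I \<Longrightarrow> ?A $$ (i, l) = A $$ (pick I i, pick J l)"
    using submatrix_index_subset[OF I J] card by simp
  have "upper_triangular ?A"
  proof (rule upper_triangularI)
    fix i l assume "l < i" "i < dim_row ?A"
    moreover have "pick I i < dim_row A"
      using pick_in_set[of i I] I \<open>i < dim_row ?A\<close> carrier by auto
    ultimately show "?A $$ (i, l) = 0"
      using idx below upper_triangularD[OF A] carrier by simp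
  qed
  hence "det ?A = prod_list (diag_mat ?A)"
    using det_upper_triangular carrier by blast
  also have "\<dots> = (\<Prod>i = 0..<card I. ?A $$ (i, i))"
    using carrier by (simp add: diag_mat_def prod.distinct_set_conv_list[symmetric])
  also have "\<dots> = (\<Prod>i = 0..<card I. A $$ (pick I i, pick J i))"
    using idx by simp
  finally show ?thesis .
qed

lemma det_submatrix_initial_columns_eq_0:
  fixes A :: "'a::comm_ring_1 mat"
  assumes A: "upper_triangular A" and I: "I \<subseteq> {0..<dim_row A}" and k: "k \<le> dim_col A"
    and card: "card I = k" and ne: "I \<noteq> {0..<k}"
  shows "det (submatrix A I {0..<k}) = 0"
proof -
  have fin: "finite I" using I finite_subset by blast
  have "det (submatrix A I {0..<k}) = (\<Prod>i = 0..<k. A $$ (pick I i, pick {0..<k} i))"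
  proof (rule trans[OF det_submatrix_upper_triangular[OF A I]])
    show "{0..<k} \<subseteq> {0..<dim_col A}" using k by auto
    fix i l assume "l < i" "i < card I"
    thus "pick {0..<k} l < pick I i" using pick_atLeastLessThan pick_ge_index[of i I] card by simp
  qed (simp_all add: card)
  also have "\<dots> = (\<Prod>i = 0..<k. A $$ (pick I i, i))"
    by (rule prod.cong) (simp_all add: pick_atLeastLessThan)
  finally have det: "det (submatrix A I {0..<k}) = (\<Prod>i = 0..<k. A $$ (pick I i, i))" .
  have "\<not> I \<subseteq> {0..<k}"
    using card_subset_eq[OF finite_atLeastLessThan, of I 0 k] card ne by auto
  then obtain t where t: "t \<in> I" "k \<le> t"
    by (meson atLeastLessThan_iff not_le subsetI zero_le)
  define i where "i = card {a\<in>I. a < t}"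
  have "i < k" "pick I i = t"
    using card_less_in_set[OF fin t(1)] pick_card_in_set[OF t(1)] card unfolding i_def by auto
  moreover have "t < dim_row A" using I t(1) by auto
  ultimately have "A $$ (pick I i, i) = 0" using t(2) upper_triangularD[OF A] by simp
  thus ?thesis unfolding det using \<open>i < k\<close> by (intro prod_zero) auto
qed

definition top_minor :: "'a::comm_ring_1 mat \<Rightarrow> nat set \<Rightarrow> 'a" where
  "top_minor A S = det (submatrix A {0..<card S} S)"

lemma top_minor_atLeastLessThan:
  assumes A: "upper_triangular A" and m: "m \<le> dim_row A" "m \<le> dim_col A"
  shows "top_minor A {0..<m} = (\<Prod>i = 0..<m. A $$ (i, i))"
proof -
  have "top_minor A {0..<m} = (\<Prod>i = 0..<m. A $$ (pick {0..<m} i, pick {0..<m} i))"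
    unfolding top_minor_def
    by (rule trans[OF det_submatrix_upper_triangular[OF A]]) (use m pick_atLeastLessThan in auto)
  also have "\<dots> = (\<Prod>i = 0..<m. A $$ (i, i))"
    by (rule prod.cong) (simp_all add: pick_atLeastLessThan)
  finally show ?thesis .
qed

lemma top_minor_gap:
  assumes A: "upper_triangular A" and j: "Suc j < dim_row A" "Suc j < dim_col A"
  shows "top_minor A (insert (Suc j) {0..<j}) = (\<Prod>i = 0..<j. A $$ (i, i)) * A $$ (j, Suc j)"
proof -
  let ?S = "insert (Suc j) {0..<j}"
  have card: "card ?S = Suc j" by simp
  have pick: "pick ?S i = (if i < j then i else Suc j)" if "i < Suc j" for i
  proof (cases "i < j")
    case True
    have "{a\<in>?S. a < i} = {0..<i}" using True by auto
    hence "card {a\<in>?S. a < i} = i" by simp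
    moreover have "pick ?S (card {a\<in>?S. a < i}) = i"
      using True by (intro pick_card_in_set) simp
    ultimately show ?thesis using True by simp
  next
    case False
    have "{a\<in>?S. a < Suc j} = {0..<j}" by auto
    hence "card {a\<in>?S. a < Suc j} = j" by simp
    moreover have "pick ?S (card {a\<in>?S. a < Suc j}) = Suc j"
      by (intro pick_card_in_set) simp
    moreover have "i = j" using False that by simp
    ultimately show ?thesis by simp
  qed
  have "top_minor A ?S = (\<Prod>i = 0..<Suc j. A $$ (pick {0..<Suc j} i, pick ?S i))"
    unfolding top_minor_def card
  proof (rule trans[OF det_submatrix_upper_triangular[OF A]])
    show "{0..<Suc j} \<subseteq> {0..<dim_row A}" "?S \<subseteq> {0..<dim_col A}" using j by auto
    fix i l assume "l < i" "i < card {0..<Suc j}"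
    thus "pick ?S l < pick {0..<Suc j} i" using pick pick_atLeastLessThan by simp
  qed simp_all
  also have "\<dots> = (\<Prod>i = 0..<Suc j. A $$ (i, if i < j then i else Suc j))"
    by (rule prod.cong) (simp_all add: pick pick_atLeastLessThan)
  also have "\<dots> = (\<Prod>i = 0..<j. A $$ (i, if i < j then i else Suc j)) * A $$ (j, Suc j)"
    by (simp add: prod.atLeast0_lessThan_Suc)
  also have "(\<Prod>i = 0..<j. A $$ (i, if i < j then i else Suc j)) = (\<Prod>i = 0..<j. A $$ (i, i))"
    by (rule prod.cong) simp_all
  finally show ?thesis .
qed

section \<open>Minors under elementary row and column operations\<close>

lemma det_linear_row:
  fixes A A1 A2 :: "'a::comm_ring_1 mat"
  assumes A: "A \<in> carrier_mat k k" and A1: "A1 \<in> carrier_mat k k" and A2: "A2 \<in> carrier_mat k k"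
    and p: "p < k"
    and other: "\<And>i l. i < k \<Longrightarrow> l < k \<Longrightarrow> i \<noteq> p \<Longrightarrow> A $$ (i, l) = A1 $$ (i, l) \<and> A2 $$ (i, l) = A1 $$ (i, l)"
    and row_p: "\<And>l. l < k \<Longrightarrow> A $$ (p, l) = A1 $$ (p, l) + c * A2 $$ (p, l)"
  shows "det A = det A1 + c * det A2"
proof -
  have diagonal_product: "(\<Prod>i = 0..<k. A $$ (i, q i)) =
      (\<Prod>i = 0..<k. A1 $$ (i, q i)) + c * (\<Prod>i = 0..<k. A2 $$ (i, q i))"
    if "q permutes {0..<k}" for q
  proof -
    have q: "q i < k" if "i < k" for i
      using permutes_in_image[OF \<open>q permutes {0..<k}\<close>] that by simp
    let ?R = "{0..<k} - {p}"
    have "(\<Prod>i\<in>?R. A $$ (i, q i)) = (\<Prod>i\<in>?R. A1 $$ (i, q i))"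
      and "(\<Prod>i\<in>?R. A2 $$ (i, q i)) = (\<Prod>i\<in>?R. A1 $$ (i, q i))"
      using other q by (auto intro: prod.cong)
    moreover have "p \<in> {0..<k}" using p by simp
    ultimately show ?thesis
      unfolding prod.remove[OF finite_atLeastLessThan \<open>p \<in> {0..<k}\<close>] row_p[OF q[OF p]]
      by (simp add: algebra_simps)
  qed
  have "det A = (\<Sum>q | q permutes {0..<k}. signof q * (\<Prod>i = 0..<k. A $$ (i, q i)))"
    by (rule det_def'[OF A])
  also have "\<dots> = (\<Sum>q | q permutes {0..<k}. signof q * (\<Prod>i = 0..<k. A1 $$ (i, q i))
      + c * (signof q * (\<Prod>i = 0..<k. A2 $$ (i, q i))))"
    by (rule sum.cong) (simp_all add: diagonal_product algebra_simps)
  also have "\<dots> = det A1 + c * det A2"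
    by (simp add: det_def'[OF A1] det_def'[OF A2] sum.distrib sum_distrib_left)
  finally show ?thesis .
qed

lemma submatrix_addrow_index:
  assumes I: "I \<subseteq> {0..<dim_row A}" and J: "J \<subseteq> {0..<dim_col A}"
    and i: "i < card I" and m: "m < card J"
  shows "submatrix (addrow a k l A) I J $$ (i, m) = (if k = pick I i
    then a * A $$ (l, pick J m) + A $$ (pick I i, pick J m) else A $$ (pick I i, pick J m))"
proof -
  have "submatrix (addrow a k l A) I J $$ (i, m) = addrow a k l A $$ (pick I i, pick J m)"
    by (rule submatrix_index_subset) (use I J i m in simp_all)
  thus ?thesis using pick_less_if_subset[OF I i] pick_less_if_subset[OF J m] by simp
qed

lemma submatrix_addrow_outside:
  assumes "k \<notin> I" and I: "I \<subseteq> {0..<dim_row A}" and J: "J \<subseteq> {0..<dim_col A}"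
  shows "submatrix (addrow a k l A) I J = submatrix A I J"
proof (rule eq_matI)
  have I': "I \<subseteq> {0..<dim_row (addrow a k l A)}" and J': "J \<subseteq> {0..<dim_col (addrow a k l A)}"
    using I J by simp_all
  show "dim_row (submatrix (addrow a k l A) I J) = dim_row (submatrix A I J)"
    "dim_col (submatrix (addrow a k l A) I J) = dim_col (submatrix A I J)"
    using submatrix_carrier_mat[OF I J] submatrix_carrier_mat[OF I' J'] by simp_all
  fix i m assume "i < dim_row (submatrix A I J)" "m < dim_col (submatrix A I J)"
  hence im: "i < card I" "m < card J" using submatrix_carrier_mat[OF I J] by simp_all
  have "pick I i \<noteq> k" using pick_in_set[of i I] im(1) assms(1) by auto
  thus "submatrix (addrow a k l A) I J $$ (i, m) = submatrix A I J $$ (i, m)"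
    using submatrix_addrow_index[OF I J im] submatrix_index_subset[OF I J im] by simp
qed

lemma submatrix_addrow_inside:
  assumes kl: "k \<in> I" "l \<in> I" and I: "I \<subseteq> {0..<dim_row A}" and J: "J \<subseteq> {0..<dim_col A}"
  shows "submatrix (addrow a k l A) I J
    = addrow a (card {x\<in>I. x < k}) (card {x\<in>I. x < l}) (submatrix A I J)"
    (is "_ = addrow a ?p ?q _")
proof (rule eq_matI)
  have I': "I \<subseteq> {0..<dim_row (addrow a k l A)}" and J': "J \<subseteq> {0..<dim_col (addrow a k l A)}"
    using I J by simp_all
  show "dim_row (submatrix (addrow a k l A) I J) = dim_row (addrow a ?p ?q (submatrix A I J))"
    "dim_col (submatrix (addrow a k l A) I J) = dim_col (addrow a ?p ?q (submatrix A I J))"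
    using submatrix_carrier_mat[OF I J] submatrix_carrier_mat[OF I' J'] by simp_all
  have fin: "finite I" using I finite_subset by blast
  have q: "?q < card I" "pick I ?q = l"
    using card_less_in_set[OF fin kl(2)] pick_card_in_set[OF kl(2)] by simp_all
  fix i m assume "i < dim_row (addrow a ?p ?q (submatrix A I J))"
    "m < dim_col (addrow a ?p ?q (submatrix A I J))"
  hence im: "i < card I" "m < card J" using submatrix_carrier_mat[OF I J] by simp_all
  have "k = pick I i \<longleftrightarrow> i = ?p" using pick_eq_iff[OF im(1) kl(1)] by auto
  thus "submatrix (addrow a k l A) I J $$ (i, m) = addrow a ?p ?q (submatrix A I J) $$ (i, m)"
    using submatrix_addrow_index[OF I J im] submatrix_index_subset[OF I J] q im
      submatrix_carrier_mat[OF I J] by auto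
qed

lemma det_submatrix_addrow:
  fixes A :: "'a::comm_ring_1 mat"
  assumes kl: "k \<in> I \<Longrightarrow> l \<in> I" "k \<noteq> l"
    and I: "I \<subseteq> {0..<dim_row A}" and J: "J \<subseteq> {0..<dim_col A}" and card: "card I = card J"
  shows "det (submatrix (addrow a k l A) I J) = det (submatrix A I J)"
proof (cases "k \<in> I")
  case True
  let ?p = "card {x\<in>I. x < k}" and ?q = "card {x\<in>I. x < l}"
  have fin: "finite I" using I finite_subset by blast
  have "?q < card I" using card_less_in_set[OF fin] kl True by simp
  moreover have "?p \<noteq> ?q"
    using pick_card_in_set[OF True] pick_card_in_set[of l I] kl True by metis
  moreover have "submatrix A I J \<in> carrier_mat (card I) (card I)"
    using submatrix_carrier_mat[OF I J] card by simp
  ultimately show ?thesis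
    unfolding submatrix_addrow_inside[OF True kl(1)[OF True] I J] by (rule det_addrow)
qed (simp add: submatrix_addrow_outside[OF _ I J])

lemma det_submatrix_addrow_adjacent:
  fixes A :: "'a::comm_ring_1 mat"
  assumes j: "j \<notin> I" "Suc j \<in> I"
    and I: "I \<subseteq> {0..<dim_row A}" and J: "J \<subseteq> {0..<dim_col A}" and card: "card I = card J"
  shows "det (submatrix (addrow a (Suc j) j A) I J)
    = det (submatrix A I J) + a * det (submatrix A (adj_transpose j ` I) J)"
proof -
  let ?I = "adj_transpose j ` I" and ?k = "card I"
  have I': "I \<subseteq> {0..<dim_row (addrow a (Suc j) j A)}" and J': "J \<subseteq> {0..<dim_col (addrow a (Suc j) j A)}"
    and I'': "?I \<subseteq> {0..<dim_row A}" using I J j by (auto simp: transpose_def)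
  have card_I: "card ?I = ?k" by (simp add: card_image)
  have fin: "finite I" using I finite_subset by blast
  define p where "p = card {x\<in>I. x < Suc j}"
  have p: "p < ?k" "pick I p = Suc j"
    using card_less_in_set[OF fin j(2)] pick_card_in_set[OF j(2)] unfolding p_def by auto
  have other: "pick I i \<noteq> Suc j" "pick I i \<noteq> j" if "i < ?k" "i \<noteq> p" for i
    using pick_eq_iff[OF that(1) j(2)] pick_in_set[of i I] that j(1) unfolding p_def by auto
  have idx: "submatrix A I J $$ (i, m) = A $$ (pick I i, pick J m)"
    "submatrix A ?I J $$ (i, m) = A $$ (adj_transpose j (pick I i), pick J m)"
    if "i < ?k" "m < ?k" for i m
    using submatrix_index_subset[OF I J] submatrix_index_subset[OF I'' J]
      pick_adj_transpose_image[of j I] j card card_I that by auto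
  show ?thesis
  proof (rule det_linear_row[OF _ _ _ p(1)])
    show "submatrix (addrow a (Suc j) j A) I J \<in> carrier_mat ?k ?k"
      "submatrix A I J \<in> carrier_mat ?k ?k" "submatrix A ?I J \<in> carrier_mat ?k ?k"
      using submatrix_carrier_mat[OF I' J'] submatrix_carrier_mat[OF I J]
        submatrix_carrier_mat[OF I'' J] card card_I by simp_all
  next
    fix i m assume im: "i < ?k" "m < ?k" "i \<noteq> p"
    thus "submatrix (addrow a (Suc j) j A) I J $$ (i, m) = submatrix A I J $$ (i, m)
      \<and> submatrix A ?I J $$ (i, m) = submatrix A I J $$ (i, m)"
      using submatrix_addrow_index[OF I J] idx other[OF im(1,3), THEN not_sym] other[OF im(1,3)] card
      by simp
  next
    fix m assume "m < ?k"
    thus "submatrix (addrow a (Suc j) j A) I J $$ (p, m)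
      = submatrix A I J $$ (p, m) + a * submatrix A ?I J $$ (p, m)"
      using submatrix_addrow_index[OF I J p(1)] idx[OF p(1)] p(2) card by simp
  qed
qed

lemma submatrix_swapcols_adjacent_index:
  assumes I: "I \<subseteq> {0..<dim_row A}" and J: "J \<subseteq> {0..<dim_col A}" and j: "Suc j < dim_col A"
    and i: "i < card I" and m: "m < card J"
  shows "submatrix (swapcols j (Suc j) A) I J $$ (i, m) = A $$ (pick I i, adj_transpose j (pick J m))"
proof -
  have "submatrix (swapcols j (Suc j) A) I J $$ (i, m) = swapcols j (Suc j) A $$ (pick I i, pick J m)"
    by (rule submatrix_index_subset) (use I J i m in simp_all)
  thus ?thesis using pick_less_if_subset[OF I i] pick_less_if_subset[OF J m] j
    by (auto simp: transpose_def)
qed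

lemma submatrix_swapcols_adjacent_single:
  assumes I: "I \<subseteq> {0..<dim_row A}" and J: "J \<subseteq> {0..<dim_col A}" and j: "Suc j < dim_col A"
    and single: "\<not> (j \<in> J \<and> Suc j \<in> J)"
  shows "submatrix (swapcols j (Suc j) A) I J = submatrix A I (adj_transpose j ` J)"
proof (rule eq_matI)
  have I': "I \<subseteq> {0..<dim_row (swapcols j (Suc j) A)}" and J': "J \<subseteq> {0..<dim_col (swapcols j (Suc j) A)}"
    and J'': "adj_transpose j ` J \<subseteq> {0..<dim_col A}" using I J j by (auto simp: transpose_def)
  have card: "card (adj_transpose j ` J) = card J" by (simp add: card_image)
  show "dim_row (submatrix (swapcols j (Suc j) A) I J) = dim_row (submatrix A I (adj_transpose j ` J))"
    "dim_col (submatrix (swapcols j (Suc j) A) I J) = dim_col (submatrix A I (adj_transpose j ` J))"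
    using submatrix_carrier_mat[OF I' J'] submatrix_carrier_mat[OF I J''] card by simp_all
  fix i m assume "i < dim_row (submatrix A I (adj_transpose j ` J))"
    "m < dim_col (submatrix A I (adj_transpose j ` J))"
  hence im: "i < card I" "m < card J" using submatrix_carrier_mat[OF I J''] card by simp_all
  thus "submatrix (swapcols j (Suc j) A) I J $$ (i, m) = submatrix A I (adj_transpose j ` J) $$ (i, m)"
    using submatrix_swapcols_adjacent_index[OF I J j im] submatrix_index_subset[OF I J'']
      pick_adj_transpose_image[OF single] card by simp
qed

lemma submatrix_swapcols_adjacent_both:
  assumes I: "I \<subseteq> {0..<dim_row A}" and J: "J \<subseteq> {0..<dim_col A}" and j: "Suc j < dim_col A"
    and both: "j \<in> J" "Suc j \<in> J"
  obtains q where "Suc q < card J"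
    and "submatrix (swapcols j (Suc j) A) I J = swapcols q (Suc q) (submatrix A I J)"
proof
  have fin: "finite J" using J finite_subset by blast
  define q where "q = card {x\<in>J. x < j}"
  have "{x\<in>J. x < Suc j} = insert j {x\<in>J. x < j}" using both by auto
  hence Suc_q: "card {x\<in>J. x < Suc j} = Suc q" using fin unfolding q_def by simp
  show q: "Suc q < card J"
    using card_less_in_set[OF fin both(2)] Suc_q by simp
  have col_j: "pick J m = j \<longleftrightarrow> m = q" "pick J m = Suc j \<longleftrightarrow> m = Suc q" if "m < card J" for m
    using pick_eq_iff[OF that both(1)] pick_eq_iff[OF that both(2)] Suc_q unfolding q_def by auto
  have I': "I \<subseteq> {0..<dim_row (swapcols j (Suc j) A)}" and J': "J \<subseteq> {0..<dim_col (swapcols j (Suc j) A)}"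
    using I J by simp_all
  show "submatrix (swapcols j (Suc j) A) I J = swapcols q (Suc q) (submatrix A I J)"
  proof (rule eq_matI)
    fix i m assume "i < dim_row (swapcols q (Suc q) (submatrix A I J))"
      "m < dim_col (swapcols q (Suc q) (submatrix A I J))"
    hence im: "i < card I" "m < card J" using submatrix_carrier_mat[OF I J] by simp_all
    show "submatrix (swapcols j (Suc j) A) I J $$ (i, m) = swapcols q (Suc q) (submatrix A I J) $$ (i, m)"
      using submatrix_swapcols_adjacent_index[OF I J j im] submatrix_index_subset[OF I J]
        col_j[OF im(2)] col_j[OF less_trans[OF lessI q]] col_j[OF q] im q
        submatrix_carrier_mat[OF I J]
      by (auto simp: transpose_def)
  qed (use submatrix_carrier_mat[OF I J] submatrix_carrier_mat[OF I' J'] in simp_all)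
qed

lemma det_submatrix_swapcols_adjacent:
  fixes A :: "'a::comm_ring_1 mat"
  assumes I: "I \<subseteq> {0..<dim_row A}" and J: "J \<subseteq> {0..<dim_col A}" and j: "Suc j < dim_col A"
    and card: "card I = card J"
  shows "det (submatrix (swapcols j (Suc j) A) I J) = det (submatrix A I (adj_transpose j ` J))
    \<or> det (submatrix (swapcols j (Suc j) A) I J) = - det (submatrix A I (adj_transpose j ` J))"
proof (cases "j \<in> J \<and> Suc j \<in> J")
  case True
  then obtain q where q: "Suc q < card J"
    and swap: "submatrix (swapcols j (Suc j) A) I J = swapcols q (Suc q) (submatrix A I J)"
    using submatrix_swapcols_adjacent_both[OF I J j] by blast
  have "submatrix A I J \<in> carrier_mat (card J) (card J)"
    using submatrix_carrier_mat[OF I J] card by simp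
  hence "det (submatrix (swapcols j (Suc j) A) I J) = - det (submatrix A I J)"
    unfolding swap using q by (intro det_swapcols) auto
  thus ?thesis using True by simp
qed (simp add: submatrix_swapcols_adjacent_single[OF I J j])

definition elim_swap :: "nat \<Rightarrow> 'a::comm_ring_1 \<Rightarrow> 'a mat \<Rightarrow> 'a mat" where
  "elim_swap j c A = swapcols j (Suc j) (addrow (- c) (Suc j) j A)"

lemma elim_swap_carrier: "A \<in> carrier_mat n n \<Longrightarrow> elim_swap j c A \<in> carrier_mat n n"
  by (simp add: elim_swap_def)

lemma upper_triangular_elim_swap:
  fixes A :: "'a::comm_ring_1 mat"
  assumes ut: "upper_triangular A" and A: "A \<in> carrier_mat n n" and j: "Suc j < n"
    and c: "A $$ (Suc j, Suc j) = c * A $$ (j, Suc j)"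
  shows "upper_triangular (elim_swap j c A)"
proof (rule upper_triangularI)
  fix i l assume li: "l < i" and "i < dim_row (elim_swap j c A)"
  hence i: "i < n" and l: "l < n" using A by (simp_all add: elim_swap_def)
  have zero: "A $$ (r, s) = 0" if "s < r" "r < n" for r s
    using upper_triangularD[OF ut that(1)] that(2) A by simp
  have entry: "elim_swap j c A $$ (i, l) = (if Suc j = i
      then - c * A $$ (j, adj_transpose j l) + A $$ (i, adj_transpose j l)
      else A $$ (i, adj_transpose j l))"
    using i l j A by (auto simp: elim_swap_def transpose_def)
  show "elim_swap j c A $$ (i, l) = 0"
  proof (cases "i = Suc j")
    case True
    hence "l = j \<or> l < j" using li by auto
    thus ?thesis using entry True c zero j by (auto simp: transpose_def)
  next
    case False
    hence "adj_transpose j l < i" using li by (auto simp: transpose_def)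
    thus ?thesis using entry False zero i by simp
  qed
qed

text \<open>The row operation leaves the top minors unchanged: an initial segment of rows that
  contains j + 1 also contains j.\<close>

lemma top_minor_elim_swap:
  fixes A :: "'a::comm_ring_1 mat"
  assumes A: "A \<in> carrier_mat n n" and j: "Suc j < n" and S: "S \<subseteq> {0..<n}"
  shows "top_minor (elim_swap j c A) S = top_minor A (adj_transpose j ` S)
    \<or> top_minor (elim_swap j c A) S = - top_minor A (adj_transpose j ` S)"
proof -
  let ?E = "addrow (- c) (Suc j) j A" and ?k = "card S" and ?S = "adj_transpose j ` S"
  have "?k \<le> n" using card_mono[OF finite_atLeastLessThan S] by simp
  hence rows: "{0..<?k} \<subseteq> {0..<dim_row ?E}" "{0..<?k} \<subseteq> {0..<dim_row A}" using A by auto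
  have cols: "S \<subseteq> {0..<dim_col ?E}" "?S \<subseteq> {0..<dim_col A}"
    using S j A by (auto simp: transpose_def)
  have card: "card ?S = ?k" by (simp add: card_image)
  have "det (submatrix ?E {0..<?k} ?S) = det (submatrix A {0..<?k} ?S)"
    by (rule det_submatrix_addrow) (use rows cols card in auto)
  moreover have "det (submatrix (swapcols j (Suc j) ?E) {0..<?k} S) = det (submatrix ?E {0..<?k} ?S)
      \<or> det (submatrix (swapcols j (Suc j) ?E) {0..<?k} S) = - det (submatrix ?E {0..<?k} ?S)"
    by (rule det_submatrix_swapcols_adjacent) (use rows cols j A in auto)
  ultimately show ?thesis unfolding top_minor_def elim_swap_def card by auto
qed

section \<open>Valuations\<close>

lemma val_zero: "nonarch_valuation val \<Longrightarrow> val 0 = \<infinity>"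
  unfolding nonarch_valuation_def by auto

lemma val_finite:
  assumes "nonarch_valuation val" and "x \<noteq> 0"
  shows "val x = ereal (real_of_ereal (val x))"
proof -
  have "val x \<noteq> \<infinity>" "val x \<noteq> -\<infinity>" using assms unfolding nonarch_valuation_def by auto
  thus ?thesis by (cases "val x") auto
qed

lemma val_mult: "nonarch_valuation val \<Longrightarrow> val (x * y) = val x + val y"
  unfolding nonarch_valuation_def by auto

lemma val_uminus:
  assumes V: "nonarch_valuation val"
  shows "val (- x) = val x"
proof -
  obtain r s where r: "val 1 = ereal r" and s: "val (- 1) = ereal s"
    using val_finite[OF V, of 1] val_finite[OF V, of "- 1"] by auto
  have "val 1 = val 1 + val 1" "val 1 = val (- 1) + val (- 1)"
    using val_mult[OF V, of 1 1] val_mult[OF V, of "- 1" "- 1"] by simp_all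
  hence "val (- 1) = 0" using r s by simp
  thus ?thesis using val_mult[OF V, of "- 1" x] by simp
qed

lemma val_eq_if_eq_or_uminus:
  assumes "nonarch_valuation val" and "x = y \<or> x = - y"
  shows "val x = val y"
  using assms val_uminus by auto

lemma val_add_mult_ge:
  assumes V: "nonarch_valuation val" and c: "0 \<le> val c" and x: "v \<le> val x" and y: "v \<le> val y"
  shows "v \<le> val (x + c * y)"
proof -
  have "val y \<noteq> -\<infinity>" using V unfolding nonarch_valuation_def by auto
  hence "val y \<le> val c + val y" using c by (cases "val c"; cases "val y") auto
  hence "v \<le> val (c * y)" using y val_mult[OF V, of c y] by simp
  hence "v \<le> min (val x) (val (c * y))" using x by simp
  also have "\<dots> \<le> val (x + c * y)" using V unfolding nonarch_valuation_def by blast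
  finally show ?thesis .
qed

lemma val_divide_nonneg:
  assumes V: "nonarch_valuation val" and y: "y \<noteq> 0" and le: "val y \<le> val x"
  shows "0 \<le> val (x / y)"
proof -
  have "val x = val (x / y) + val y" using val_mult[OF V, of "x / y" y] y by simp
  moreover obtain r where "val y = ereal r" using val_finite[OF V y] by blast
  moreover have "val (x / y) \<noteq> -\<infinity>" using V unfolding nonarch_valuation_def by auto
  ultimately show ?thesis using le by (cases "val (x / y)") auto
qed

lemma real_nu_mult:
  assumes V: "nonarch_valuation val" and "x \<noteq> 0" and "y \<noteq> 0"
  shows "real_of_ereal (nu val (x * y)) = real_of_ereal (nu val x) + real_of_ereal (nu val y)"
proof -
  obtain a b where "val x = ereal a" "val y = ereal b"
    using val_finite[OF V assms(2)] val_finite[OF V assms(3)] by blast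
  thus ?thesis by (simp add: nu_def val_mult[OF V])
qed

lemma real_nu_le_iff:
  assumes V: "nonarch_valuation val" and "x \<noteq> 0" and "y \<noteq> 0"
  shows "real_of_ereal (nu val x) \<le> real_of_ereal (nu val y) \<longleftrightarrow> val y \<le> val x"
proof -
  obtain a b where "val x = ereal a" "val y = ereal b"
    using val_finite[OF V assms(2)] val_finite[OF V assms(3)] by blast
  thus ?thesis by (simp add: nu_def)
qed

section \<open>Admissible matrices\<close>

lemma submodular_on_reindex:
  assumes F: "submodular_on n F" and f: "inj f" "f ` {0..<n} \<subseteq> {0..<n}"
    and G: "\<And>S. S \<subseteq> {0..<n} \<Longrightarrow> G S = F (f ` S)"
  shows "submodular_on n G"
  unfolding submodular_on_def
proof (intro allI impI)
  fix S T assume S: "S \<subseteq> {0..<n}" and T: "T \<subseteq> {0..<n}"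
  have "f ` S \<subseteq> {0..<n}" "f ` T \<subseteq> {0..<n}" using S T f(2) by auto
  hence "F (f ` S \<inter> f ` T) + F (f ` S \<union> f ` T) \<le> F (f ` S) + F (f ` T)"
    using F unfolding submodular_on_def by blast
  moreover have "f ` (S \<inter> T) = f ` S \<inter> f ` T" using f(1) by (simp add: image_Int)
  moreover have "S \<inter> T \<subseteq> {0..<n}" "S \<union> T \<subseteq> {0..<n}" using S T by auto
  ultimately show "G (S \<inter> T) + G (S \<union> T) \<le> G S + G T" using G S T by (simp add: image_Un)
qed

definition admissible :: "('a::field \<Rightarrow> ereal) \<Rightarrow> nat \<Rightarrow> 'a mat \<Rightarrow> bool" where
  "admissible val n B \<longleftrightarrow> B \<in> carrier_mat n n \<and> upper_triangular B \<and>
     (\<forall>S. S \<subseteq> {0..<n} \<longrightarrow> top_minor B S \<noteq> 0) \<and>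
     submodular_on n (\<lambda>S. real_of_ereal (nu val (top_minor B S)))"

lemma admissible_superdiagonal_val_le:
  fixes val :: "'a::field \<Rightarrow> ereal"
  assumes V: "nonarch_valuation val" and adm: "admissible val n B" and j: "Suc j < n"
  shows "B $$ (j, Suc j) \<noteq> 0 \<and> val (B $$ (j, Suc j)) \<le> val (B $$ (Suc j, Suc j))"
proof -
  have B: "dim_row B = n" "dim_col B = n" and ut: "upper_triangular B"
    and nonzero: "\<And>S. S \<subseteq> {0..<n} \<Longrightarrow> top_minor B S \<noteq> 0"
    and sub: "submodular_on n (\<lambda>S. real_of_ereal (nu val (top_minor B S)))"
    using adm unfolding admissible_def by auto
  let ?w = "\<lambda>x. real_of_ereal (nu val x)"
  let ?P = "\<Prod>i = 0..<j. B $$ (i, i)"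
  let ?a = "B $$ (j, j)" and ?b = "B $$ (j, Suc j)" and ?d = "B $$ (Suc j, Suc j)"
  let ?X = "{0..<Suc j}" and ?Y = "insert (Suc j) {0..<j}"
  have sets: "?X \<inter> ?Y = {0..<j}" "?X \<union> ?Y = {0..<Suc (Suc j)}" by auto
  have XY: "?X \<subseteq> {0..<n}" "?Y \<subseteq> {0..<n}" using j by auto
  have top: "top_minor B {0..<j} = ?P" "top_minor B ?X = ?P * ?a"
    "top_minor B {0..<Suc (Suc j)} = ?P * ?a * ?d" "top_minor B ?Y = ?P * ?b"
    using top_minor_atLeastLessThan[OF ut] top_minor_gap[OF ut] B j
    by (simp_all add: prod.atLeast0_lessThan_Suc)
  have "?P * ?a * ?d \<noteq> 0" "?P * ?b \<noteq> 0"
    using nonzero[of "{0..<Suc (Suc j)}"] nonzero[of ?Y] top j by auto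
  hence nz: "?P \<noteq> 0" "?a \<noteq> 0" "?b \<noteq> 0" "?d \<noteq> 0" by auto
  have "?w (top_minor B (?X \<inter> ?Y)) + ?w (top_minor B (?X \<union> ?Y))
      \<le> ?w (top_minor B ?X) + ?w (top_minor B ?Y)"
    using sub XY unfolding submodular_on_def by blast
  hence "?w ?P + ?w (?P * ?a * ?d) \<le> ?w (?P * ?a) + ?w (?P * ?b)"
    unfolding sets top .
  hence "?w ?d \<le> ?w ?b" using real_nu_mult[OF V] nz by simp
  thus ?thesis using real_nu_le_iff[OF V nz(4) nz(3)] nz(3) by simp
qed

lemma admissible_elim_swap:
  fixes val :: "'a::field \<Rightarrow> ereal"
  assumes V: "nonarch_valuation val" and adm: "admissible val n B" and j: "Suc j < n"
    and c: "c = B $$ (Suc j, Suc j) / B $$ (j, Suc j)"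
  shows "admissible val n (elim_swap j c B)"
proof -
  have B: "B \<in> carrier_mat n n" and ut: "upper_triangular B"
    and nonzero: "\<And>S. S \<subseteq> {0..<n} \<Longrightarrow> top_minor B S \<noteq> 0"
    and sub: "submodular_on n (\<lambda>S. real_of_ereal (nu val (top_minor B S)))"
    using adm unfolding admissible_def by auto
  have "B $$ (j, Suc j) \<noteq> 0" using admissible_superdiagonal_val_le[OF V adm j] by simp
  hence "B $$ (Suc j, Suc j) = c * B $$ (j, Suc j)" using c by simp
  hence ut': "upper_triangular (elim_swap j c B)" by (rule upper_triangular_elim_swap[OF ut B j])
  have image: "adj_transpose j ` S \<subseteq> {0..<n}" if "S \<subseteq> {0..<n}" for S
    using that j by (auto simp: transpose_def)
  have nu_top: "nu val (top_minor (elim_swap j c B) S) = nu val (top_minor B (adj_transpose j ` S))"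
    if "S \<subseteq> {0..<n}" for S
    using val_eq_if_eq_or_uminus[OF V top_minor_elim_swap[OF B j that]] by (simp add: nu_def)
  have "top_minor (elim_swap j c B) S \<noteq> 0" if "S \<subseteq> {0..<n}" for S
    using top_minor_elim_swap[OF B j that, of c] nonzero[OF image[OF that]] by auto
  moreover have "submodular_on n (\<lambda>S. real_of_ereal (nu val (top_minor (elim_swap j c B) S)))"
    by (rule submodular_on_reindex[OF sub inj_transpose image[OF order_refl]]) (simp add: nu_top)
  ultimately show ?thesis unfolding admissible_def using elim_swap_carrier[OF B] ut' by blast
qed

lemma val_top_minor_le_initial_columns:
  assumes V: "nonarch_valuation val" and ut: "upper_triangular B" and B: "B \<in> carrier_mat n n"
    and T: "T \<subseteq> {0..<n}" and k: "k \<le> n" and card: "card T = k"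
  shows "val (top_minor B {0..<k}) \<le> val (det (submatrix B T {0..<k}))"
proof (cases "T = {0..<k}")
  case False
  hence "det (submatrix B T {0..<k}) = 0"
    by (intro det_submatrix_initial_columns_eq_0[OF ut]) (use B T k card in auto)
  thus ?thesis using val_zero[OF V] by simp
qed (simp add: top_minor_def)

lemma val_minors_elim_swap:
  fixes B :: "'a::field mat"
  assumes V: "nonarch_valuation val" and B: "B \<in> carrier_mat n n" and j: "Suc j < n"
    and S: "S \<subseteq> {0..<n}" and T: "T \<subseteq> {0..<n}" and card: "card T = card S"
  shows "val (top_minor (elim_swap j c B) (adj_transpose j ` S)) = val (top_minor B S)"
    and "val (det (submatrix (elim_swap j c B) T (adj_transpose j ` S)))
      = val (det (submatrix (addrow (- c) (Suc j) j B) T S))"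
proof -
  let ?S = "adj_transpose j ` S"
  have S': "?S \<subseteq> {0..<n}" using S j by (auto simp: transpose_def)
  have card_S: "card ?S = card S" by (simp add: card_image)
  have S_back: "adj_transpose j ` ?S = S" by (simp add: image_image)
  show "val (top_minor (elim_swap j c B) ?S) = val (top_minor B S)"
    using val_eq_if_eq_or_uminus[OF V top_minor_elim_swap[OF B j S', of c]] unfolding S_back by simp
  show "val (det (submatrix (elim_swap j c B) T ?S)) = val (det (submatrix (addrow (- c) (Suc j) j B) T S))"
    using det_submatrix_swapcols_adjacent[of T "addrow (- c) (Suc j) j B" ?S j] T card S' j B card_S
    by (intro val_eq_if_eq_or_uminus[OF V]) (simp add: elim_swap_def S_back)
qed

lemma val_det_submatrix_ge_if_addrow_adjacent:
  fixes B :: "'a::field mat"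
  assumes V: "nonarch_valuation val" and c: "0 \<le> val c"
    and reduced: "v \<le> val (det (submatrix (addrow (- c) (Suc j) j B) T S))"
    and shifted: "j \<notin> T \<Longrightarrow> Suc j \<in> T \<Longrightarrow> v \<le> val (det (submatrix B (adj_transpose j ` T) S))"
    and T: "T \<subseteq> {0..<dim_row B}" and S: "S \<subseteq> {0..<dim_col B}" and card: "card T = card S"
  shows "v \<le> val (det (submatrix B T S))"
proof (cases "j \<notin> T \<and> Suc j \<in> T")
  case True
  let ?T = "adj_transpose j ` T"
  have "det (submatrix (addrow (- c) (Suc j) j B) T S)
      = det (submatrix B T S) + - c * det (submatrix B ?T S)"
    by (rule det_submatrix_addrow_adjacent) (use True T S card in auto)
  hence "det (submatrix B T S) = det (submatrix (addrow (- c) (Suc j) j B) T S) + c * det (submatrix B ?T S)"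
    by simp
  thus ?thesis using val_add_mult_ge[OF V c reduced shifted] True by simp
next
  case False
  hence "det (submatrix (addrow (- c) (Suc j) j B) T S) = det (submatrix B T S)"
    by (intro det_submatrix_addrow) (use T S card in auto)
  thus ?thesis using reduced by simp
qed

lemma val_top_minor_le_val_det_submatrix:
  fixes val :: "'a::field \<Rightarrow> ereal"
  assumes V: "nonarch_valuation val"
  shows "admissible val n B \<Longrightarrow> S \<subseteq> {0..<n} \<Longrightarrow> T \<subseteq> {0..<n} \<Longrightarrow> card T = card S \<Longrightarrow>
    val (top_minor B S) \<le> val (det (submatrix B T S))"
proof (induction "\<Sum> T + \<Sum> S" arbitrary: B S T rule: less_induct)
  case less
  have B: "B \<in> carrier_mat n n" and ut: "upper_triangular B"
    using less.prems(1) unfolding admissible_def by auto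
  have fin: "finite S" "finite T"
    using less.prems(2,3) finite_subset[OF _ finite_atLeastLessThan] by blast+
  consider (initial) k where "S = {0..<k}" | (gap) j where "j \<notin> S" "Suc j \<in> S"
    using atLeastLessThan_if_downward_closed[OF fin(1)] by blast
  then show ?case
  proof cases
    case (initial k)
    have "k \<le> n" using card_mono[OF finite_atLeastLessThan less.prems(2)] initial by simp
    thus ?thesis
      unfolding initial using val_top_minor_le_initial_columns[OF V ut B less.prems(3)] less.prems(4) initial
      by simp
  next
    case (gap j)
    have j: "Suc j < n" using gap(2) less.prems(2) by auto
    define c where "c = B $$ (Suc j, Suc j) / B $$ (j, Suc j)"
    have c: "0 \<le> val c"
      using admissible_superdiagonal_val_le[OF V less.prems(1) j] val_divide_nonneg[OF V]
      unfolding c_def by blast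
    let ?S = "adj_transpose j ` S" and ?T = "adj_transpose j ` T"
    have "val (top_minor (elim_swap j c B) ?S) \<le> val (det (submatrix (elim_swap j c B) T ?S))"
    proof (rule less.hyps)
      show "\<Sum> T + \<Sum> ?S < \<Sum> T + \<Sum> S" using sum_adj_transpose_image_less[OF fin(1) gap] by simp
      show "?S \<subseteq> {0..<n}" using less.prems(2) j by (auto simp: transpose_def)
      show "card T = card ?S" using less.prems(4) by (simp add: card_image)
    qed (use admissible_elim_swap[OF V less.prems(1) j c_def] less.prems(3) in auto)
    hence reduced: "val (top_minor B S) \<le> val (det (submatrix (addrow (- c) (Suc j) j B) T S))"
      using val_minors_elim_swap[OF V B j less.prems(2-4)] by simp
    have shifted: "val (top_minor B S) \<le> val (det (submatrix B ?T S))" if "j \<notin> T" "Suc j \<in> T"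
    proof (rule less.hyps)
      show "\<Sum> ?T + \<Sum> S < \<Sum> T + \<Sum> S" using sum_adj_transpose_image_less[OF fin(2) that] by simp
      show "?T \<subseteq> {0..<n}" using less.prems(3) j by (auto simp: transpose_def)
      show "card ?T = card S" using less.prems(4) by (simp add: card_image)
    qed (use less.prems in auto)
    show ?thesis
      using val_det_submatrix_ge_if_addrow_adjacent[OF V c reduced shifted] less.prems(2-4) B by auto
  qed
qed

theorem lemma3p4:
  fixes val :: "'a::field \<Rightarrow> ereal" and B :: "'a mat" and n :: nat
  assumes "nonarch_valuation val"
    and "B \<in> carrier_mat n n"
    and "upper_triangular B"
    and "\<forall>S. S \<subseteq> {0..<n} \<longrightarrow>
           nu val (det (submatrix B {0..<card S} S)) \<noteq> \<infinity> \<and>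
           nu val (det (submatrix B {0..<card S} S)) \<noteq> -\<infinity>"
    and "submodular_on n (\<lambda>S. real_of_ereal (nu val (det (submatrix B {0..<card S} S))))"
    and "S \<subseteq> {0..<n}" and "T \<subseteq> {0..<n}" and "card S = card T"
  shows "nu val (det (submatrix B {0..<card S} S)) \<ge> nu val (det (submatrix B T S))"
proof -
  have "top_minor B X \<noteq> 0" if "X \<subseteq> {0..<n}" for X
    using assms(4) that val_zero[OF assms(1)] by (auto simp: top_minor_def nu_def)
  hence "admissible val n B"
    using assms(2,3,5) unfolding admissible_def top_minor_def by blast
  hence "val (top_minor B S) \<le> val (det (submatrix B T S))"
    using val_top_minor_le_val_det_submatrix[OF assms(1)] assms(6-8) by simp
  thus ?thesis by (simp add: top_minor_def nu_def)
qed

end
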